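(* Let $H_A,H_B,H_C,H_D$ be finite-dimensional Hilbert spaces, let $|\psi_{AB}\rangle\in H_A\otimes H_B$ and $|\phi_{CD}\rangle\in H_C\otimes H_D$ be unit vectors with Schmidt decompositions $|\psi_{AB}\rangle=\sum_i\lambda_i|i_Ai_B\rangle$ and $|\phi_{CD}\rangle=\sum_j\mu_j|j_Cj_D\rangle$ (Schmidt coefficients $\lambda_i,\mu_j\ge 0$), and let $\rho_{AB}=|\psi_{AB}\rangle\langle\psi_{AB}|$, $\rho_{CD}=|\phi_{CD}\rangle\langle\phi_{CD}|$. Then $$N_H^{b}(\rho_{AB}\otimes\rho_{CD})=1-\sum_{i,j}\lambda_i^4\mu_j^4 .$$
   Context: For states $\rho_{AB}$ on $H_A\otimes H_B$ and $\rho_{CD}$ on $H_C\otimes H_D$, the nonbilocality measure is defined as $$N_H^{b}(\rho_{AB}\otimes\rho_{CD})=\max_{\Pi^{BC}}\big\|\sqrt{\rho_{AB}\otimes\rho_{CD}}-\Pi^{BC}(\sqrt{\rho_{AB}\otimes\rho_{CD}})\big\|^2,$$ where $\|X\|=\sqrt{\mathrm{tr}(X^\dagger X)}$ is the Hilbert–Schmidt norm, the maximum is over all von Neumann (complete rank-one projective) measurements $\Pi^{BC}=\{\Pi^{BC}_h\}$ on $H_B\otimes H_C$ that leave $\rho_{BC}=\mathrm{tr}_{AD}(\rho_{AB}\otimes\rho_{CD})=\rho_B\otimes\rho_C$ invariant, i.e. $\sum_h\Pi^{BC}_h\rho_{BC}\Pi^{BC}_h=\rho_{BC}$, and $\Pi^{BC}(X)=\sum_h(I^A\otimes\Pi^{BC}_h\otimes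 I^D)X(I^A\otimes\Pi^{BC}_h\otimes I^D)$ (with the tensor factors ordered $A,B,C,D$). *)

theory Defs
  imports "HOL-Analysis.Analysis"
begin

text \<open>Finite-dimensional Hilbert spaces are modelled as complex^'n for a finite
index type 'n; operators as complex^'n^'n.\<close>

definition adj :: "complex^'n^'m \<Rightarrow> complex^'m^'n" where
  "adj M = (\<chi> i j. cnj (M$j$i))"

definition outer :: "complex^'n \<Rightarrow> complex^'n \<Rightarrow> complex^'n^'n" where
  "outer u v = (\<chi> i j. u$i * cnj (v$j))"

definition cscale :: "complex \<Rightarrow> complex^'n \<Rightarrow> complex^'n" where
  "cscale c v = (\<chi> i. c * v$i)"

definition tensor_vec :: "complex^'a \<Rightarrow> complex^'b \<Rightarrow> complex^('a \<times> 'b)" where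
  "tensor_vec u v = (\<chi> p. u$(fst p) * v$(snd p))"

definition tensor_op :: "complex^'a^'a \<Rightarrow> complex^'b^'b \<Rightarrow> complex^('a \<times> 'b)^('a \<times> 'b)" where
  "tensor_op X Y = (\<chi> p q. X$(fst p)$(fst q) * Y$(snd p)$(snd q))"

definition psd :: "complex^'n^'n \<Rightarrow> bool" where
  "psd M \<longleftrightarrow> (\<forall>v::complex^'n. \<exists>r::real. r \<ge> 0 \<and>
      (\<Sum>i\<in>UNIV. \<Sum>j\<in>UNIV. cnj (v$i) * M$i$j * v$j) = complex_of_real r)"

definition mat_sqrt :: "complex^'n::finite^'n \<Rightarrow> complex^'n^'n" where
  "mat_sqrt M = (THE X. psd X \<and> X ** X = M)"

definition mtrace :: "complex^'n^'n \<Rightarrow> complex" where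
  "mtrace M = (\<Sum>i\<in>UNIV. M$i$i)"

definition hs_norm :: "complex^'n^'n \<Rightarrow> real" where
  "hs_norm X = sqrt (Re (mtrace (adj X ** X)))"

definition orthonormal_family :: "nat \<Rightarrow> (nat \<Rightarrow> complex^'n) \<Rightarrow> bool" where
  "orthonormal_family n u \<longleftrightarrow> (\<forall>i<n. \<forall>j<n.
      (\<Sum>x\<in>UNIV. cnj (u i $ x) * u j $ x) = (if i = j then 1 else 0))"

definition rank_one_proj :: "complex^'n^'n \<Rightarrow> bool" where
  "rank_one_proj P \<longleftrightarrow> (\<exists>e::complex^'n. norm e = 1 \<and> P = outer e e)"

definition von_neumann_meas :: "nat \<Rightarrow> (nat \<Rightarrow> complex^'n^'n) \<Rightarrow> bool" where
  "von_neumann_meas m P \<longleftrightarrow> (\<forall>h<m. rank_one_proj (P h)) \<and> (\<Sum>h<m. P h) = mat 1"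

definition meas_channel :: "nat \<Rightarrow> (nat \<Rightarrow> complex^'n^'n) \<Rightarrow> complex^'n^'n \<Rightarrow> complex^'n^'n" where
  "meas_channel m P X = (\<Sum>h<m. P h ** X ** P h)"

text \<open>I^A (x) P (x) I^D on ((a,b),(c,d)) for P acting on H_B (x) H_C.\<close>
definition embed_BC :: "complex^('b::finite \<times> 'c::finite)^('b \<times> 'c) \<Rightarrow>
    complex^(('a::finite \<times> 'b) \<times> ('c \<times> 'd::finite))^(('a \<times> 'b) \<times> ('c \<times> 'd))" where
  "embed_BC P = (\<chi> p q.
     if fst (fst p) = fst (fst q) \<and> snd (snd p) = snd (snd q)
     then P$(snd (fst p), fst (snd p))$(snd (fst q), fst (snd q)) else 0)"

definition ptrace_AD :: "complex^(('a::finite \<times> 'b::finite) \<times> ('c::finite \<times> 'd::finite))^(('a \<times> 'b) \<times> ('c \<times> 'd)) \<Rightarrow>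
    complex^('b \<times> 'c)^('b \<times> 'c)" where
  "ptrace_AD R = (\<chi> p q. \<Sum>a\<in>UNIV. \<Sum>d\<in>UNIV.
      R$((a, fst p), (snd p, d))$((a, fst q), (snd q, d)))"

definition NHb :: "complex^('a::finite \<times> 'b::finite)^('a \<times> 'b) \<Rightarrow> complex^('c::finite \<times> 'd::finite)^('c \<times> 'd) \<Rightarrow> real" where
  "NHb rhoAB rhoCD =
    (let R = tensor_op rhoAB rhoCD; S = mat_sqrt R; rhoBC = ptrace_AD R in
     Sup { (hs_norm (S - (\<Sum>h<m. embed_BC (P h) ** S ** embed_BC (P h))))\<^sup>2 | m P.
           von_neumann_meas m P \<and> meas_channel m P rhoBC = rhoBC })"

end

theory Submission
  imports Defs
begin

text \<open>Let \<open>\<Psi> = \<psi> \<otimes> \<phi>\<close> and \<open>R = |\<Psi>\<rangle>\<langle>\<Psi>|\<close>. Being a rank-one projection, \<open>R\<close> is its own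
  positive square root. For a von Neumann measurement \<open>P\<^sub>h = |e\<^sub>h\<rangle>\<langle>e\<^sub>h|\<close> on \<open>BC\<close>, the operators
  \<open>E\<^sub>h = I \<otimes> P\<^sub>h \<otimes> I\<close> are mutually orthogonal projections, and expanding the Hilbert-Schmidt
  norm gives \<open>\<parallel>R - \<Sum>\<^sub>h E\<^sub>h R E\<^sub>h\<parallel>\<^sup>2 = 1 - \<Sum>\<^sub>h \<langle>\<Psi>|E\<^sub>h|\<Psi>\<rangle>\<^sup>2 = 1 - \<Sum>\<^sub>h tr(\<rho>\<^sub>B\<^sub>C P\<^sub>h)\<^sup>2\<close>.
  If the measurement leaves \<open>\<rho>\<^sub>B\<^sub>C\<close> invariant, then \<open>\<rho>\<^sub>B\<^sub>C = \<Sum>\<^sub>h tr(\<rho>\<^sub>B\<^sub>C P\<^sub>h) P\<^sub>h\<close>, so the last sum is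
  \<open>tr(\<rho>\<^sub>B\<^sub>C\<^sup>2)\<close>: every admissible measurement gives the same value \<open>1 - tr(\<rho>\<^sub>B\<^sub>C\<^sup>2)\<close>.
  The Schmidt decompositions give \<open>\<rho>\<^sub>B\<^sub>C = \<rho>\<^sub>B \<otimes> \<rho>\<^sub>C\<close> with \<open>\<rho>\<^sub>B = \<Sum>\<^sub>i \<lambda>\<^sub>i\<^sup>2 |i\<^sub>B\<rangle>\<langle>i\<^sub>B|\<close> and
  \<open>\<rho>\<^sub>C = \<Sum>\<^sub>j \<mu>\<^sub>j\<^sup>2 |j\<^sub>C\<rangle>\<langle>j\<^sub>C|\<close>, hence \<open>tr(\<rho>\<^sub>B\<^sub>C\<^sup>2) = \<Sum>\<^sub>i\<^sub>j \<lambda>\<^sub>i\<^sup>4 \<mu>\<^sub>j\<^sup>4\<close>; and the measurement in a product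
  basis extending the Schmidt vectors of \<open>B\<close> and \<open>C\<close> is admissible, so the supremum is over a
  nonempty set.\<close>

definition cinner :: "complex^'n::finite \<Rightarrow> complex^'n \<Rightarrow> complex" where
  "cinner u v = (\<Sum>i\<in>UNIV. cnj (u$i) * v$i)"

definition mscale :: "complex \<Rightarrow> complex^'n^'m \<Rightarrow> complex^'n^'m" where
  "mscale c M = (\<chi> i j. c * M$i$j)"

definition hs_inner :: "complex^'n::finite^'m::finite \<Rightarrow> complex^'n^'m \<Rightarrow> complex" where
  "hs_inner X Y = (\<Sum>i\<in>UNIV. \<Sum>j\<in>UNIV. cnj (X$i$j) * Y$i$j)"

lemma matrix_matrix_mult_nth: "(A ** B)$i$j = (\<Sum>k\<in>UNIV. A$i$k * B$k$j)"
  by (simp add: matrix_matrix_mult_def)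

lemma matrix_vector_mult_nth: "(A *v x)$i = (\<Sum>j\<in>UNIV. A$i$j * x$j)"
  by (simp add: matrix_vector_mult_def)

lemma outer_nth [simp]: "outer u v $i$j = u$i * cnj (v$j)"
  by (simp add: outer_def)

lemma mscale_nth [simp]: "mscale c M $i$j = c * M$i$j"
  by (simp add: mscale_def)

lemma adj_nth [simp]: "adj M $i$j = cnj (M$j$i)"
  by (simp add: adj_def)

lemma cscale_nth [simp]: "cscale c v $i = c * v$i"
  by (simp add: cscale_def)

lemma tensor_vec_nth [simp]: "tensor_vec u v $p = u$(fst p) * v$(snd p)"
  by (simp add: tensor_vec_def)

lemma tensor_op_nth [simp]: "tensor_op X Y $p$q = X$(fst p)$(fst q) * Y$(snd p)$(snd q)"
  by (simp add: tensor_op_def)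

lemma mat_nth: "mat c $i$j = (if i = j then c else 0)"
  by (simp add: mat_def)

lemma sum_UNIV_prod:
  "(\<Sum>p\<in>(UNIV::('a::finite \<times> 'b::finite) set). f p) = (\<Sum>a\<in>UNIV. \<Sum>b\<in>UNIV. f (a, b))"
  by (simp add: sum.cartesian_product)

lemma sum_swap3:
  "(\<Sum>p\<in>A. \<Sum>q\<in>B. \<Sum>h\<in>C. f p q h) = (\<Sum>h\<in>C. \<Sum>p\<in>A. \<Sum>q\<in>B. f p q h)"
  by (simp add: sum.swap[of _ C])

lemma sum_swap_2_2:
  "(\<Sum>x\<in>A. \<Sum>y\<in>B. \<Sum>u\<in>C. \<Sum>v\<in>D. f x y u v) = (\<Sum>u\<in>C. \<Sum>v\<in>D. \<Sum>x\<in>A. \<Sum>y\<in>B. f x y u v)"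
proof -
  have "(\<Sum>x\<in>A. \<Sum>y\<in>B. \<Sum>u\<in>C. \<Sum>v\<in>D. f x y u v) = (\<Sum>u\<in>C. \<Sum>x\<in>A. \<Sum>y\<in>B. \<Sum>v\<in>D. f x y u v)"
    by (rule sum_swap3)
  also have "\<dots> = (\<Sum>u\<in>C. \<Sum>v\<in>D. \<Sum>x\<in>A. \<Sum>y\<in>B. f x y u v)"
    by (intro sum.cong[OF refl] sum_swap3)
  finally show ?thesis .
qed

lemma cnj_mult_self: "cnj z * z = of_real ((cmod z)^2)"
  by (metis complex_norm_square mult.commute)

lemma mult_cnj_self: "z * cnj z = of_real ((cmod z)^2)"
  by (metis complex_norm_square)

lemma cinner_self: "cinner v v = of_real ((norm v)^2)"
  by (simp add: cinner_def norm_vec_def L2_set_def sum_nonneg cnj_mult_self of_real_sum)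

lemma norm_eq_1_iff_cinner: "norm v = 1 \<longleftrightarrow> cinner v v = 1"
proof -
  have "cinner v v = 1 \<longleftrightarrow> (norm v)^2 = 1"
    by (simp only: cinner_self of_real_eq_1_iff)
  then show ?thesis
    using norm_ge_zero[of v] by (auto simp: power2_eq_1_iff)
qed

lemma cinner_cnj: "cinner v u = cnj (cinner u v)"
  by (simp add: cinner_def mult.commute)

lemma cinner_cscale_left: "cinner (cscale c u) v = cnj c * cinner u v"
  by (simp add: cinner_def sum_distrib_left mult_ac)

lemma cinner_cscale_right: "cinner u (cscale c v) = c * cinner u v"
  by (simp add: cinner_def sum_distrib_left mult_ac)

lemma cinner_diff_right: "cinner u (v - w) = cinner u v - cinner u w"
  by (simp add: cinner_def algebra_simps sum_subtractf)

lemma cinner_sum_right: "cinner u (\<Sum>h\<in>S. f h) = (\<Sum>h\<in>S. cinner u (f h))"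
  by (simp add: cinner_def sum_distrib_left) (rule sum.swap)

lemma cinner_sum_left: "cinner (\<Sum>h\<in>S. f h) v = (\<Sum>h\<in>S. cinner (f h) v)"
  by (simp add: cinner_cnj[of _ v] cinner_sum_right)

lemma cinner_tensor_vec:
  "cinner (tensor_vec u v) (tensor_vec u' v') = cinner u u' * cinner v v'"
  by (simp add: cinner_def sum_UNIV_prod sum_product mult_ac)

lemma cinner_adj: "cinner u (A *v v) = cinner (adj A *v u) v"
  by (simp add: cinner_def matrix_vector_mult_nth sum_distrib_left sum_distrib_right mult_ac)
     (rule sum.swap)

lemma orthonormal_familyD:
  "orthonormal_family n u \<Longrightarrow> i < n \<Longrightarrow> j < n \<Longrightarrow> cinner (u i) (u j) = (if i = j then 1 else 0)"
  by (simp add: orthonormal_family_def cinner_def)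

lemma cinner_sum_orthonormal:
  assumes "orthonormal_family n u"
  shows "cinner (\<Sum>i<n. cscale (a i) (u i)) (\<Sum>j<n. cscale (b j) (u j)) = (\<Sum>i<n. cnj (a i) * b i)"
proof -
  have "cinner (\<Sum>i<n. cscale (a i) (u i)) (\<Sum>j<n. cscale (b j) (u j))
      = (\<Sum>i<n. \<Sum>j<n. cnj (a i) * b j * cinner (u i) (u j))"
    unfolding cinner_sum_left
    by (simp add: cinner_sum_right cinner_cscale_left cinner_cscale_right sum_distrib_left mult_ac)
  also have "\<dots> = (\<Sum>i<n. \<Sum>j<n. if i = j then cnj (a i) * b i else 0)"
    by (intro sum.cong refl) (simp add: orthonormal_familyD[OF assms])
  finally show ?thesis by simp
qed

lemma mscale_mult_left: "mscale c A ** B = mscale c (A ** B)"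
  by (simp add: vec_eq_iff matrix_matrix_mult_nth sum_distrib_left mult_ac)

lemma mscale_0 [simp]: "mscale 0 A = 0"
  by (simp add: vec_eq_iff)

lemma mscale_1 [simp]: "mscale 1 A = A"
  by (simp add: vec_eq_iff)

lemma mscale_mult_right: "A ** mscale c B = mscale c (A ** B)"
  by (simp add: vec_eq_iff matrix_matrix_mult_nth sum_distrib_left mult_ac)

lemma mscale_mscale [simp]: "mscale c (mscale d A) = mscale (c * d) A"
  by (simp add: vec_eq_iff)

lemma matrix_mult_sum_left: "(\<Sum>h\<in>S. f h) ** B = (\<Sum>h\<in>S. f h ** B)"
  by (simp add: vec_eq_iff matrix_matrix_mult_nth sum_distrib_right) (intro allI sum.swap)

lemma matrix_mult_sum_right: "A ** (\<Sum>h\<in>S. f h) = (\<Sum>h\<in>S. A ** f h)"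
  by (simp add: vec_eq_iff matrix_matrix_mult_nth sum_distrib_left) (intro allI sum.swap)

lemma matrix_vector_mult_sum_left: "(\<Sum>h\<in>S. f h) *v x = (\<Sum>h\<in>S. f h *v x)"
  by (simp add: vec_eq_iff matrix_vector_mult_nth sum_distrib_right) (intro allI sum.swap)

lemma matrix_mult_diff_left: "(A - B) ** C = A ** C - B ** (C::complex^'n::finite^'n)"
  by (simp add: vec_eq_iff matrix_matrix_mult_nth algebra_simps sum_subtractf)

lemma matrix_mult_diff_right: "A ** (B - C) = A ** B - A ** (C::complex^'n::finite^'n)"
  by (simp add: vec_eq_iff matrix_matrix_mult_nth algebra_simps sum_subtractf)

lemma outer_mult_outer: "outer u v ** outer w z = mscale (cinner v w) (outer u z)"
  by (simp add: vec_eq_iff matrix_matrix_mult_nth cinner_def sum_distrib_left sum_distrib_right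
      mult_ac)

lemma outer_mult_vec: "outer u v *v x = cscale (cinner v x) u"
  by (simp add: vec_eq_iff matrix_vector_mult_nth cinner_def sum_distrib_left sum_distrib_right
      mult_ac)

lemma matrix_mult_outer: "A ** outer u v = outer (A *v u) v"
  by (simp add: vec_eq_iff matrix_matrix_mult_nth matrix_vector_mult_nth sum_distrib_left
      sum_distrib_right mult_ac)

lemma outer_matrix_mult: "outer u v ** B = outer u (adj B *v v)"
  by (simp add: vec_eq_iff matrix_matrix_mult_nth matrix_vector_mult_nth sum_distrib_left mult_ac)

lemma tensor_op_outer: "tensor_op (outer u u) (outer v v) = outer (tensor_vec u v) (tensor_vec u v)"
  by (simp add: vec_eq_iff mult_ac)

lemma tensor_op_mult: "tensor_op A B ** tensor_op C D = tensor_op (A ** C) (B ** D)"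
  by (simp add: vec_eq_iff matrix_matrix_mult_nth sum_UNIV_prod sum_product mult_ac)

lemma tensor_op_sum:
  "tensor_op (\<Sum>s\<in>S. X s) (\<Sum>t\<in>T. Y t) = (\<Sum>s\<in>S. \<Sum>t\<in>T. tensor_op (X s) (Y t))"
  by (simp add: vec_eq_iff sum_product)

lemma tensor_op_mat_1: "tensor_op (mat 1) (mat 1) = mat 1"
  by (simp add: vec_eq_iff mat_nth prod_eq_iff)

lemma adj_outer [simp]: "adj (outer u v) = outer v u"
  by (simp add: vec_eq_iff)

lemma adj_mult: "adj (A ** B) = adj B ** adj A"
  by (simp add: vec_eq_iff matrix_matrix_mult_nth mult_ac)

lemma adj_diff: "adj (A - B) = adj A - adj B"
  by (simp add: vec_eq_iff)

lemma mtrace_outer: "mtrace (outer u v) = cinner v u"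
  by (simp add: mtrace_def cinner_def mult.commute)

lemma mtrace_mult_outer: "mtrace (A ** outer u v) = cinner v (A *v u)"
  by (simp add: matrix_mult_outer mtrace_outer)

lemma mtrace_mult_commute: "mtrace (A ** B) = mtrace (B ** A)"
  by (simp add: mtrace_def matrix_matrix_mult_nth mult_ac) (rule sum.swap)

lemma mtrace_sum: "mtrace (\<Sum>h\<in>S. f h) = (\<Sum>h\<in>S. mtrace (f h))"
  by (simp add: mtrace_def) (rule sum.swap)

lemma mtrace_mscale: "mtrace (mscale c A) = c * mtrace A"
  by (simp add: mtrace_def sum_distrib_left)

lemma mtrace_tensor_op: "mtrace (tensor_op X Y) = mtrace X * mtrace Y"
  by (simp add: mtrace_def sum_UNIV_prod sum_product)

lemma hs_inner_outer: "hs_inner (outer a b) (outer c d) = cinner a c * cinner d b"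
  by (simp add: hs_inner_def cinner_def sum_distrib_left sum_distrib_right mult_ac)

lemma hs_inner_sum_left: "hs_inner (\<Sum>h\<in>S. f h) Y = (\<Sum>h\<in>S. hs_inner (f h) Y)"
proof -
  have "hs_inner (\<Sum>h\<in>S. f h) Y = (\<Sum>i\<in>UNIV. \<Sum>j\<in>UNIV. \<Sum>h\<in>S. cnj (f h $i$j) * Y$i$j)"
    by (simp add: hs_inner_def sum_distrib_right)
  also have "\<dots> = (\<Sum>h\<in>S. hs_inner (f h) Y)"
    unfolding hs_inner_def by (rule sum_swap3)
  finally show ?thesis .
qed

lemma hs_inner_sum_right: "hs_inner X (\<Sum>h\<in>S. f h) = (\<Sum>h\<in>S. hs_inner X (f h))"
proof -
  have "hs_inner X (\<Sum>h\<in>S. f h) = (\<Sum>i\<in>UNIV. \<Sum>j\<in>UNIV. \<Sum>h\<in>S. cnj (X$i$j) * f h $i$j)"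
    by (simp add: hs_inner_def sum_distrib_left)
  also have "\<dots> = (\<Sum>h\<in>S. hs_inner X (f h))"
    unfolding hs_inner_def by (rule sum_swap3)
  finally show ?thesis .
qed

lemma hs_inner_diff_self:
  "hs_inner (A - B) (A - B) = hs_inner A A - hs_inner A B - hs_inner B A + hs_inner B B"
  by (simp add: hs_inner_def algebra_simps sum_subtractf sum.distrib)

lemma hs_inner_self: "hs_inner X X = of_real (\<Sum>i\<in>UNIV. \<Sum>j\<in>UNIV. (cmod (X$i$j))^2)"
  by (simp add: hs_inner_def cnj_mult_self of_real_sum)

lemma hs_inner_self_eq_0: "hs_inner A A = 0 \<Longrightarrow> A = 0"
  unfolding hs_inner_self of_real_eq_0_iff by (simp add: sum_nonneg_eq_0_iff sum_nonneg vec_eq_iff)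

lemma mtrace_adj_mult: "mtrace (adj X ** Y) = hs_inner X Y"
  by (simp add: mtrace_def hs_inner_def matrix_matrix_mult_nth) (rule sum.swap)

lemma hs_norm_sq: "(hs_norm X)^2 = Re (hs_inner X X)"
  by (simp add: hs_norm_def mtrace_adj_mult hs_inner_self sum_nonneg)

section \<open>The square root of a pure state\<close>

lemma psd_iff_cinner: "psd X \<longleftrightarrow> (\<forall>v. \<exists>r::real. r \<ge> 0 \<and> cinner v (X *v v) = of_real r)"
proof -
  have "(\<Sum>i\<in>UNIV. \<Sum>j\<in>UNIV. cnj (v$i) * X$i$j * v$j) = cinner v (X *v v)" for v
    by (simp add: cinner_def matrix_vector_mult_nth sum_distrib_left mult_ac)
  then show ?thesis by (simp add: psd_def)
qed

lemma psd_outer: "psd (outer w w)"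
  unfolding psd_iff_cinner
proof
  fix v
  have "cinner v (outer w w *v v) = of_real ((cmod (cinner v w))^2)"
    by (simp only: outer_mult_vec cinner_cscale_right cinner_cnj[of w v] cnj_mult_self)
  then show "\<exists>r. 0 \<le> r \<and> cinner v (outer w w *v v) = complex_of_real r"
    using zero_le_power2 by blast
qed

lemma cinner_two_point_quadratic_form:
  fixes X :: "complex^'n::finite^'n" and i j :: 'n and a b :: complex
  defines "v \<equiv> (\<chi> k. (if k = i then a else 0) + (if k = j then b else 0)) :: complex^'n"
  shows "cinner v (X *v v) = cnj a * (a * X$i$i + b * X$i$j) + cnj b * (a * X$j$i + b * X$j$j)"
proof -
  have mult_if: "x * (if P then y else 0) = (if P then x * y else 0)"
    and if_mult: "(if P then y else 0) * x = (if P then y * x else 0)"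
    and cnj_if: "cnj (if P then y else 0) = (if P then cnj y else 0)" for x y :: complex and P
    by simp_all
  have Xv: "(X *v v)$k = a * X$k$i + b * X$k$j" for k
    by (simp add: v_def matrix_vector_mult_nth distrib_left sum.distrib mult_if mult.commute)
  show ?thesis
    unfolding cinner_def Xv by (simp add: v_def distrib_right sum.distrib cnj_if if_mult)
qed

lemma psd_imp_hermitian:
  assumes "psd X"
  shows "adj X = X"
proof -
  have real_form: "Im (cinner v (X *v v)) = 0" for v
    using assms unfolding psd_iff_cinner by (metis Im_complex_of_real)
  have "cnj (X$i$j) = X$j$i" for i j
  proof -
    let ?v = "\<lambda>a b. (\<chi> k. (if k = i then a else 0) + (if k = j then b else 0)) :: complex^_"
    have "Im (cnj a * (a * X$i$i + b * X$i$j) + cnj b * (a * X$j$i + b * X$j$j)) = 0" for a b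
      using real_form[of "?v a b"] cinner_two_point_quadratic_form[of i a j b X] by simp
    from this[of 1 0] this[of 0 1] this[of 1 1] this[of 1 \<i>]
    have "Im (X$i$i) = 0" "Im (X$j$j) = 0" "Im (X$i$j) + Im (X$j$i) = 0"
        "Re (X$i$j) - Re (X$j$i) = 0"
      by simp_all
    then show ?thesis
      by (simp add: complex_eq_iff)
  qed
  then show ?thesis
    by (simp add: vec_eq_iff)
qed

lemma hermitian_square_projection_absorbs:
  fixes X R :: "complex^'n::finite^'n"
  assumes herm: "adj X = X" and XX: "X ** X = R" and RR: "R ** R = R"
  shows "X = X ** R"
proof -
  have "adj R = R"
    using XX herm by (metis adj_mult)
  define A where "A = X - X ** R"
  with \<open>adj R = R\<close> have "adj A ** A = (X - R ** X) ** (X - X ** R)"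
    by (simp add: adj_diff adj_mult herm)
  also have "\<dots> = X ** X - X ** X ** R - R ** (X ** X) + R ** (X ** X) ** R"
    by (simp add: matrix_mult_diff_left matrix_mult_diff_right matrix_mul_assoc algebra_simps)
  also have "\<dots> = 0"
    by (simp add: XX RR flip: matrix_mul_assoc)
  finally have "hs_inner A A = 0"
    by (simp add: mtrace_adj_mult[symmetric] mtrace_def)
  then have "A = 0"
    by (rule hs_inner_self_eq_0)
  then show ?thesis
    by (simp add: A_def)
qed

lemma psd_sqrt_outer_unique:
  fixes Psi :: "complex^'n::finite"
  assumes unit: "cinner Psi Psi = 1" and psd: "psd X" and XX: "X ** X = outer Psi Psi"
  shows "X = outer Psi Psi"
proof -
  let ?R = "outer Psi Psi"
  have herm: "adj X = X" using psd_imp_hermitian[OF psd] .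
  have RR: "?R ** ?R = ?R" using unit by (simp add: outer_mult_outer)
  have XR: "X = X ** ?R"
    using hermitian_square_projection_absorbs[OF herm XX RR] .
  then have RX: "X = ?R ** X"
    by (metis adj_mult adj_outer herm)
  obtain r where r: "r \<ge> 0" "cinner Psi (X *v Psi) = of_real r"
    using psd unfolding psd_iff_cinner by blast
  have "X = ?R ** X ** ?R"
    using XR RX by (metis matrix_mul_assoc)
  also have "\<dots> = mscale (cinner Psi (X *v Psi)) ?R"
    by (simp only: matrix_mul_assoc[symmetric] matrix_mult_outer[of X] outer_mult_outer)
  finally have X: "X = mscale (of_real r) ?R"
    using r by simp
  then have "?R = mscale (of_real (r * r)) ?R"
    using XX RR by (simp add: mscale_mult_left mscale_mult_right)
  moreover obtain p where "Psi $ p \<noteq> 0"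
    using unit by (force simp: cinner_def)
  ultimately have "of_real (r * r) = (1::complex)"
    by (metis mscale_nth outer_nth mult_cancel_right1 mult_eq_0_iff complex_cnj_zero_iff)
  then have "r\<^sup>2 = 1"
    by (simp only: of_real_eq_1_iff power2_eq_square)
  then have "r = 1"
    using r(1) by (auto simp: power2_eq_1_iff)
  then show ?thesis
    using X by simp
qed

lemma mat_sqrt_outer:
  assumes "cinner Psi Psi = 1"
  shows "mat_sqrt (outer Psi Psi) = outer Psi Psi"
  unfolding mat_sqrt_def
proof (rule the_equality)
  show "psd (outer Psi Psi) \<and> outer Psi Psi ** outer Psi Psi = outer Psi Psi"
    using assms by (simp add: psd_outer outer_mult_outer)
qed (use psd_sqrt_outer_unique[OF assms] in blast)

section \<open>Orthonormal families and von Neumann measurements\<close>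

lemma von_neumann_meas_orthonormal:
  assumes "von_neumann_meas m P"
  obtains e where "orthonormal_family m e" and "\<And>h. h < m \<Longrightarrow> P h = outer (e h) (e h)"
proof -
  from assms obtain e where e: "\<forall>h<m. norm (e h) = 1 \<and> P h = outer (e h) (e h)"
    unfolding von_neumann_meas_def rank_one_proj_def by metis
  have unit: "cinner (e h) (e h) = 1" if "h < m" for h
    using e that by (simp add: cinner_self)
  have "cinner (e h) (e g) = 0" if "h < m" "g < m" "h \<noteq> g" for h g
  proof -
    \<comment> \<open>Completeness gives \<open>1 = (\<Sum>h<m. \<bar>\<langle>e h, e g\<rangle>\<bar>\<^sup>2)\<close>, and the term \<open>h = g\<close> alone is already \<open>1\<close>.\<close>
    have "1 = cinner (e g) ((\<Sum>h<m. P h) *v e g)"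
      using unit[OF that(2)] assms by (simp add: von_neumann_meas_def)
    also have "\<dots> = (\<Sum>h<m. of_real ((cmod (cinner (e h) (e g)))^2))"
      using e by (simp add: matrix_vector_mult_sum_left cinner_sum_right outer_mult_vec
          cinner_cscale_right cinner_cnj[of "e g"] mult_cnj_self)
    finally have "(\<Sum>h<m. (cmod (cinner (e h) (e g)))^2) = 1"
      by (metis of_real_eq_1_iff of_real_sum)
    moreover have "(\<Sum>h<m. (cmod (cinner (e h) (e g)))^2)
        = 1 + (\<Sum>h\<in>{..<m}-{g}. (cmod (cinner (e h) (e g)))^2)"
      using that(2) unit[OF that(2)] by (simp add: sum.remove)
    ultimately have "(\<Sum>h\<in>{..<m}-{g}. (cmod (cinner (e h) (e g)))^2) = 0"
      by simp
    then show ?thesis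
      using that by (subst (asm) sum_nonneg_eq_0_iff) auto
  qed
  with unit have "orthonormal_family m e"
    by (simp add: orthonormal_family_def cinner_def[symmetric])
  with e that show ?thesis
    by blast
qed

lemma hermitian_idempotent_diag_le_1:
  fixes Q :: "complex^'n::finite^'n"
  assumes idem: "Q ** Q = Q" and herm: "adj Q = Q"
  shows "Re (Q$x$x) \<le> 1"
proof -
  have Q_herm: "Q$y$x = cnj (Q$x$y)" for y
    using herm by (metis adj_nth)
  have "Q$x$x = (Q ** Q)$x$x"
    using idem by simp
  also have "\<dots> = (\<Sum>y\<in>UNIV. Q$x$y * cnj (Q$x$y))"
    unfolding matrix_matrix_mult_nth by (rule sum.cong[OF refl]) (simp only: Q_herm)
  finally have sum_eq: "Re (Q$x$x) = (\<Sum>y\<in>UNIV. (cmod (Q$x$y))^2)"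
    by (simp add: mult_cnj_self)
  have "(cmod (Q$x$x))^2 \<le> (\<Sum>y\<in>UNIV. (cmod (Q$x$y))^2)"
    by (rule member_le_sum) auto
  moreover have "(Re (Q$x$x))^2 \<le> (cmod (Q$x$x))^2"
    using abs_Re_le_cmod by (metis abs_ge_zero power2_abs power_mono)
  ultimately have "(Re (Q$x$x))^2 \<le> Re (Q$x$x)"
    using sum_eq by linarith
  then have "Re (Q$x$x) * Re (Q$x$x) \<le> Re (Q$x$x) * 1"
    by (simp add: power2_eq_square)
  then show ?thesis
    using mult_le_cancel_left[of "Re (Q$x$x)" "Re (Q$x$x)" 1] by (auto simp: not_le)
qed

lemma orthonormal_family_le_CARD:
  fixes f :: "nat \<Rightarrow> complex^'n::finite"
  assumes on: "orthonormal_family M f"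
  shows "M \<le> CARD('n)"
proof -
  define Q where "Q = (\<Sum>s<M. outer (f s) (f s))"
  have "Q ** Q = (\<Sum>s<M. \<Sum>t<M. mscale (cinner (f t) (f s)) (outer (f t) (f s)))"
    by (simp add: Q_def matrix_mult_sum_left matrix_mult_sum_right outer_mult_outer)
  also have "\<dots> = (\<Sum>s<M. \<Sum>t<M. if t = s then outer (f t) (f s) else 0)"
    by (intro sum.cong refl) (simp add: orthonormal_familyD[OF on])
  finally have "Q ** Q = Q"
    by (simp add: Q_def)
  moreover have "adj Q = Q"
    by (simp add: Q_def vec_eq_iff mult.commute)
  ultimately have diag: "Re (Q$x$x) \<le> 1" for x
    by (rule hermitian_idempotent_diag_le_1)
  have "of_nat M = mtrace Q"
    by (simp add: Q_def mtrace_sum mtrace_outer orthonormal_familyD[OF on])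
  then have "real M = (\<Sum>x\<in>UNIV. Re (Q$x$x))"
    by (metis Re_complex_of_real of_real_of_nat_eq Re_sum mtrace_def)
  also have "\<dots> \<le> (\<Sum>x\<in>(UNIV::'n set). 1)"
    by (intro sum_mono diag)
  finally show ?thesis
    by simp
qed

lemma orthonormal_family_extend_step:
  fixes f :: "nat \<Rightarrow> complex^'n::finite"
  assumes on: "orthonormal_family n f" and incomplete: "(\<Sum>s<n. outer (f s) (f s)) \<noteq> mat 1"
  obtains w where "cinner w w = 1" and "\<And>s. s < n \<Longrightarrow> cinner (f s) w = 0"
proof -
  define Q where "Q = (\<Sum>s<n. outer (f s) (f s))"
  obtain v where v: "Q *v v \<noteq> v"
    using incomplete unfolding Q_def by (metis matrix_eq matrix_vector_mul_lid)
  define w0 where "w0 = v - Q *v v"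
  have "w0 \<noteq> 0"
    using v by (simp add: w0_def)
  have orth: "cinner (f t) w0 = 0" if "t < n" for t
  proof -
    have "cinner (f t) (Q *v v) = (\<Sum>s<n. if t = s then cinner (f s) v else 0)"
      unfolding Q_def matrix_vector_mult_sum_left cinner_sum_right
      by (intro sum.cong refl) (simp add: outer_mult_vec cinner_cscale_right orthonormal_familyD[OF on that])
    then show ?thesis
      using that by (simp add: w0_def cinner_diff_right)
  qed
  define w where "w = cscale (of_real (1 / norm w0)) w0"
  have "cinner w w = of_real (1 / norm w0) * of_real (1 / norm w0) * of_real ((norm w0)^2)"
    unfolding w_def cinner_cscale_left cinner_cscale_right by (simp only: cinner_self) simp
  also have "\<dots> = 1"
    using \<open>w0 \<noteq> 0\<close> by (simp add: field_simps power2_eq_square)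
  finally have "cinner w w = 1" .
  moreover have "cinner (f s) w = 0" if "s < n" for s
    using orth[OF that] by (simp add: w_def cinner_cscale_right)
  ultimately show ?thesis
    using that by blast
qed

lemma orthonormal_family_extend_basis:
  fixes f :: "nat \<Rightarrow> complex^'n::finite"
  assumes "orthonormal_family n f"
  obtains M g where "n \<le> M" and "\<And>i. i < n \<Longrightarrow> g i = f i" and "orthonormal_family M g"
    and "(\<Sum>s<M. outer (g s) (g s)) = mat 1"
  using assms
proof (induction "CARD('n) - n" arbitrary: n f rule: less_induct)
  case less
  show ?case
  proof (cases "(\<Sum>s<n. outer (f s) (f s)) = mat 1")
    case True
    then show ?thesis
      using less.prems by blast
  next
    case False
    obtain w where w: "cinner w w = 1" "\<And>s. s < n \<Longrightarrow> cinner (f s) w = 0"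
      using orthonormal_family_extend_step[OF less.prems(2) False] by blast
    define f' where "f' = f(n := w)"
    have "cinner (f' i) (f' j) = (if i = j then 1 else 0)" if "i < Suc n" "j < Suc n" for i j
      using that w cinner_cnj[of "f j" w] orthonormal_familyD[OF less.prems(2)]
      by (cases "i = n"; cases "j = n") (auto simp: f'_def)
    then have on': "orthonormal_family (Suc n) f'"
      by (simp add: orthonormal_family_def cinner_def)
    have "CARD('n) - Suc n < CARD('n) - n"
      using orthonormal_family_le_CARD[OF on'] by simp
    then show ?thesis
    proof (rule less.hyps[OF _ _ on'])
      fix M g
      assume "Suc n \<le> M" "\<And>i. i < Suc n \<Longrightarrow> g i = f' i" "orthonormal_family M g"
        "(\<Sum>s<M. outer (g s) (g s)) = mat 1"
      then show thesis
        by (intro less.prems(1)[of M g]) (auto simp: f'_def)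
    qed
  qed
qed

lemma hs_norm_sq_pure_minus_dephased:
  fixes Psi :: "complex^'n::finite" and E :: "nat \<Rightarrow> complex^'n^'n"
  assumes unit: "cinner Psi Psi = 1" and herm: "\<And>h. h < m \<Longrightarrow> adj (E h) = E h"
    and orth: "\<And>h g. h < m \<Longrightarrow> g < m \<Longrightarrow> E h ** E g = (if h = g then E h else 0)"
  shows "(hs_norm (outer Psi Psi - (\<Sum>h<m. E h ** outer Psi Psi ** E h)))^2
         = 1 - Re (\<Sum>h<m. (cinner Psi (E h *v Psi))^2)"
proof -
  define w where "w h = E h *v Psi" for h
  define p where "p h = cinner Psi (E h *v Psi)" for h
  let ?R = "outer Psi Psi" and ?W = "\<Sum>h<m. outer (w h) (w h)"
  have W: "(\<Sum>h<m. E h ** ?R ** E h) = ?W"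
    using herm by (intro sum.cong refl) (simp add: matrix_mult_outer outer_matrix_mult w_def)
  have w_Psi: "cinner (w h) Psi = p h" if "h < m" for h
    using herm[OF that] cinner_adj[of Psi "E h" Psi] by (simp add: w_def p_def)
  have w_w: "cinner (w h) (w g) = (if h = g then p h else 0)" if "h < m" "g < m" for h g
  proof -
    have "cinner (w h) (w g) = cinner Psi ((E h ** E g) *v Psi)"
      using herm[OF that(1)] cinner_adj[of Psi "E h" "E g *v Psi"]
      by (simp add: w_def matrix_vector_mul_assoc)
    then show ?thesis
      using orth[OF that] by (cases "h = g") (simp_all add: p_def cinner_def)
  qed
  have "hs_inner ?W ?W = (\<Sum>h<m. \<Sum>g<m. cinner (w g) (w h) * cinner (w h) (w g))"
    by (simp add: hs_inner_sum_left hs_inner_sum_right hs_inner_outer)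
  also have "\<dots> = (\<Sum>h<m. \<Sum>g<m. if h = g then p h * p h else 0)"
    by (intro sum.cong refl) (simp add: w_w)
  finally have "hs_inner ?W ?W = (\<Sum>h<m. p h * p h)"
    by simp
  moreover have "hs_inner ?R ?W = (\<Sum>h<m. p h * p h)" "hs_inner ?W ?R = (\<Sum>h<m. p h * p h)"
    by (simp_all add: hs_inner_sum_left hs_inner_sum_right hs_inner_outer w_Psi, simp_all add: w_def p_def)
  moreover have "hs_inner ?R ?R = 1"
    using unit by (simp add: hs_inner_outer)
  ultimately have "hs_inner (?R - ?W) (?R - ?W) = 1 - (\<Sum>h<m. (p h)^2)"
    by (simp add: hs_inner_diff_self power2_eq_square)
  then show ?thesis
    by (simp add: hs_norm_sq W p_def)
qed

lemma invariant_meas_mtrace_sq: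
  fixes rho :: "complex^'n::finite^'n"
  assumes meas: "von_neumann_meas m P" and inv: "meas_channel m P rho = rho"
  shows "mtrace (rho ** rho) = (\<Sum>h<m. (mtrace (rho ** P h))^2)"
proof -
  obtain e where e: "\<And>h. h < m \<Longrightarrow> P h = outer (e h) (e h)"
    using von_neumann_meas_orthonormal[OF meas] by blast
  have PrP: "P h ** rho ** P h = mscale (mtrace (rho ** P h)) (P h)" if "h < m" for h
  proof -
    have "P h ** rho ** P h = outer (e h) (adj rho *v e h) ** outer (e h) (e h)"
      by (simp only: e[OF that] outer_matrix_mult)
    also have "\<dots> = mscale (cinner (adj rho *v e h) (e h)) (P h)"
      by (simp add: outer_mult_outer e[OF that])
    also have "cinner (adj rho *v e h) (e h) = mtrace (rho ** P h)"
      by (simp add: e[OF that] mtrace_mult_outer cinner_adj)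
    finally show ?thesis .
  qed
  have "mtrace (rho ** rho) = mtrace (rho ** meas_channel m P rho)"
    using inv by simp
  also have "\<dots> = (\<Sum>h<m. mtrace (rho ** (P h ** rho ** P h)))"
    by (simp add: meas_channel_def matrix_mult_sum_right mtrace_sum)
  also have "\<dots> = (\<Sum>h<m. (mtrace (rho ** P h))^2)"
    by (intro sum.cong refl) (simp add: PrP mscale_mult_right mtrace_mscale power2_eq_square)
  finally show ?thesis .
qed

section \<open>Measurements on the subsystem BC\<close>

type_synonym ('a, 'b, 'c, 'd) four_party_op =
  "complex^(('a \<times> 'b) \<times> ('c \<times> 'd))^(('a \<times> 'b) \<times> ('c \<times> 'd))"

lemma embed_BC_nth:
  "embed_BC P $((a, b), (c, d)) $((a', b'), (c', d')) =
     (if a = a' \<and> d = d' then P$(b, c)$(b', c') else 0)"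
  by (simp add: embed_BC_def)

lemma embed_BC_mult_nth:
  fixes A :: "complex^('b::finite \<times> 'c::finite)^('b \<times> 'c)" and a :: "'a::finite" and d :: "'d::finite"
  shows "(embed_BC A ** M) $((a, b), (c, d)) $ q =
     (\<Sum>b'\<in>UNIV. \<Sum>c'\<in>UNIV. A$(b, c)$(b', c') * M$((a, b'), (c', d))$q)"
proof -
  define \<iota> where "\<iota> x = ((a, fst x), (snd x, d))" for x :: "'b \<times> 'c"
  have "embed_BC A $((a, b), (c, d)) $ p = 0" if "p \<notin> range \<iota>" for p
  proof -
    obtain a' b' c' d' where p: "p = ((a', b'), (c', d'))"
      by (metis prod.collapse)
    have "a' \<noteq> a \<or> d' \<noteq> d"
      using that rangeI[of \<iota> "(b', c')"] by (auto simp: p \<iota>_def)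
    then show ?thesis
      by (auto simp: p embed_BC_nth)
  qed
  then have "(embed_BC A ** M) $((a, b), (c, d)) $ q =
      (\<Sum>p\<in>range \<iota>. embed_BC A $((a, b), (c, d)) $ p * M $ p $ q)"
    unfolding matrix_matrix_mult_nth by (intro sum.mono_neutral_right) auto
  also have "\<dots> = (\<Sum>x\<in>UNIV. embed_BC A $((a, b), (c, d)) $ \<iota> x * M $ \<iota> x $ q)"
    by (rule sum.reindex_cong[where l = \<iota>]) (auto simp: inj_on_def \<iota>_def prod_eq_iff)
  finally show ?thesis
    by (simp add: \<iota>_def embed_BC_nth sum_UNIV_prod)
qed

lemma embed_BC_mult:
  "(embed_BC A ** embed_BC B :: ('a::finite, 'b::finite, 'c::finite, 'd::finite) four_party_op) =
     embed_BC (A ** B)"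
proof -
  have "(embed_BC A ** embed_BC B :: ('a, 'b, 'c, 'd) four_party_op) $((a, b), (c, d)) $((a', b'), (c', d'))
      = embed_BC (A ** B) $((a, b), (c, d)) $((a', b'), (c', d'))" for a b c d a' b' c' d'
    unfolding embed_BC_mult_nth
    by (cases "a = a' \<and> d = d'") (auto simp: embed_BC_nth matrix_matrix_mult_nth sum_UNIV_prod)
  then show ?thesis
    by (simp add: vec_eq_iff)
qed

lemma embed_BC_adj:
  "adj (embed_BC A) = (embed_BC (adj A) :: ('a::finite, 'b::finite, 'c::finite, 'd::finite) four_party_op)"
  by (auto simp: vec_eq_iff embed_BC_nth)

lemma embed_BC_0: "embed_BC 0 = (0 :: ('a::finite, 'b::finite, 'c::finite, 'd::finite) four_party_op)"
  by (simp add: vec_eq_iff embed_BC_def)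

lemma mtrace_embed_BC_mult:
  fixes R :: "('a::finite, 'b::finite, 'c::finite, 'd::finite) four_party_op"
  shows "mtrace (embed_BC A ** R) = mtrace (A ** ptrace_AD R)"
proof -
  have "mtrace (embed_BC A ** R) = (\<Sum>a\<in>UNIV. \<Sum>b\<in>UNIV. \<Sum>c\<in>UNIV. \<Sum>d\<in>UNIV. \<Sum>b'\<in>UNIV. \<Sum>c'\<in>UNIV.
      A$(b, c)$(b', c') * R$((a, b'), (c', d))$((a, b), (c, d)))"
    by (simp add: mtrace_def embed_BC_mult_nth sum_UNIV_prod)
  also have "\<dots> = (\<Sum>b\<in>UNIV. \<Sum>c\<in>UNIV. \<Sum>a\<in>UNIV. \<Sum>d\<in>UNIV. \<Sum>b'\<in>UNIV. \<Sum>c'\<in>UNIV.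
      A$(b, c)$(b', c') * R$((a, b'), (c', d))$((a, b), (c, d)))"
    by (rule sum_swap3[symmetric])
  also have "\<dots> = (\<Sum>b\<in>UNIV. \<Sum>c\<in>UNIV. \<Sum>b'\<in>UNIV. \<Sum>c'\<in>UNIV. \<Sum>a\<in>UNIV. \<Sum>d\<in>UNIV.
      A$(b, c)$(b', c') * R$((a, b'), (c', d))$((a, b), (c, d)))"
    by (intro sum.cong[OF refl] sum_swap_2_2)
  also have "\<dots> = mtrace (A ** ptrace_AD R)"
    by (simp add: mtrace_def matrix_matrix_mult_nth ptrace_AD_def sum_UNIV_prod sum_distrib_left)
  finally show ?thesis .
qed

lemma cinner_embed_BC:
  fixes Psi :: "complex^(('a::finite \<times> 'b::finite) \<times> ('c::finite \<times> 'd::finite))"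
  shows "cinner Psi (embed_BC P *v Psi) = mtrace (ptrace_AD (outer Psi Psi) ** P)"
  by (metis mtrace_mult_outer mtrace_embed_BC_mult mtrace_mult_commute)

lemma hs_norm_sq_pure_minus_dephased_embed_BC:
  fixes Psi :: "complex^(('a::finite \<times> 'b::finite) \<times> ('c::finite \<times> 'd::finite))"
  defines "rho \<equiv> ptrace_AD (outer Psi Psi)"
  assumes unit: "cinner Psi Psi = 1"
    and meas: "von_neumann_meas m P" and inv: "meas_channel m P rho = rho"
  shows "(hs_norm (outer Psi Psi - (\<Sum>h<m. embed_BC (P h) ** outer Psi Psi ** embed_BC (P h))))^2
         = 1 - Re (mtrace (rho ** rho))"
proof -
  obtain e where on: "orthonormal_family m e" and e: "\<And>h. h < m \<Longrightarrow> P h = outer (e h) (e h)"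
    using von_neumann_meas_orthonormal[OF meas] by blast
  let ?E = "\<lambda>h. embed_BC (P h) :: ('a, 'b, 'c, 'd) four_party_op"
  have E_herm: "adj (?E h) = ?E h" if "h < m" for h
    by (simp add: embed_BC_adj e[OF that])
  have E_orth: "?E h ** ?E g = (if h = g then ?E h else 0)" if "h < m" "g < m" for h g
  proof -
    have "?E h ** ?E g = embed_BC (mscale (cinner (e h) (e g)) (outer (e h) (e g)))"
      by (simp only: e[OF that(1)] e[OF that(2)] embed_BC_mult outer_mult_outer)
    then show ?thesis
      using orthonormal_familyD[OF on that] orthonormal_familyD[OF on that(2) that(2)]
      by (cases "h = g") (simp_all add: embed_BC_0 e[OF that(2)])
  qed
  have "(hs_norm (outer Psi Psi - (\<Sum>h<m. ?E h ** outer Psi Psi ** ?E h)))^2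
      = 1 - Re (\<Sum>h<m. (cinner Psi (?E h *v Psi))^2)"
    by (rule hs_norm_sq_pure_minus_dephased[OF unit E_herm E_orth])
  also have "(\<Sum>h<m. (cinner Psi (?E h *v Psi))^2) = mtrace (rho ** rho)"
    using invariant_meas_mtrace_sq[OF meas inv] by (simp add: cinner_embed_BC rho_def)
  finally show ?thesis .
qed

section \<open>Schmidt decompositions and reduced states\<close>

definition ptrace_fst :: "complex^('a::finite \<times> 'b::finite)^('a \<times> 'b) \<Rightarrow> complex^'b^'b" where
  "ptrace_fst R = (\<chi> b b'. \<Sum>a\<in>UNIV. R$(a, b)$(a, b'))"

definition ptrace_snd :: "complex^('c::finite \<times> 'd::finite)^('c \<times> 'd) \<Rightarrow> complex^'c^'c" where
  "ptrace_snd R = (\<chi> c c'. \<Sum>d\<in>UNIV. R$(c, d)$(c', d))"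

lemma ptrace_AD_tensor_op: "ptrace_AD (tensor_op X Y) = tensor_op (ptrace_fst X) (ptrace_snd Y)"
  by (simp add: vec_eq_iff ptrace_AD_def ptrace_fst_def ptrace_snd_def sum_product)

lemma sum_mult_cnj_orthonormal_expansion:
  assumes "orthonormal_family n u"
  shows "(\<Sum>x\<in>UNIV. (\<Sum>i<n. a i * u i $ x) * cnj (\<Sum>j<n. b j * u j $ x)) = (\<Sum>i<n. a i * cnj (b i))"
proof -
  have "(\<Sum>x\<in>UNIV. (\<Sum>i<n. a i * u i $ x) * cnj (\<Sum>j<n. b j * u j $ x))
      = cinner (\<Sum>j<n. cscale (b j) (u j)) (\<Sum>i<n. cscale (a i) (u i))"
    by (simp add: cinner_def mult.commute)
  also have "\<dots> = (\<Sum>i<n. cnj (b i) * a i)"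
    by (rule cinner_sum_orthonormal[OF assms])
  finally show ?thesis
    by (simp add: mult.commute)
qed

lemma ptrace_fst_outer_schmidt:
  assumes "orthonormal_family n u"
    and "psi = (\<Sum>i<n. cscale (of_real (lam i)) (tensor_vec (u i) (v i)))"
  shows "ptrace_fst (outer psi psi) = (\<Sum>i<n. mscale (of_real ((lam i)^2)) (outer (v i) (v i)))"
proof -
  have "ptrace_fst (outer psi psi) $b$b' = (\<Sum>i<n. mscale (of_real ((lam i)^2)) (outer (v i) (v i))) $b$b'"
    for b b'
  proof -
    have "ptrace_fst (outer psi psi) $b$b' = (\<Sum>a\<in>UNIV. (\<Sum>i<n. (of_real (lam i) * v i $ b) * u i $ a)
        * cnj (\<Sum>j<n. (of_real (lam j) * v j $ b') * u j $ a))"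
      by (simp add: ptrace_fst_def assms(2) mult_ac)
    also have "\<dots> = (\<Sum>i<n. (of_real (lam i) * v i $ b) * cnj (of_real (lam i) * v i $ b'))"
      by (rule sum_mult_cnj_orthonormal_expansion[OF assms(1)])
    finally show ?thesis
      by (simp add: power2_eq_square mult_ac)
  qed
  then show ?thesis
    by (simp add: vec_eq_iff)
qed

lemma ptrace_snd_outer_schmidt:
  assumes "orthonormal_family k v"
    and "phi = (\<Sum>j<k. cscale (of_real (mu j)) (tensor_vec (u j) (v j)))"
  shows "ptrace_snd (outer phi phi) = (\<Sum>j<k. mscale (of_real ((mu j)^2)) (outer (u j) (u j)))"
proof -
  have "ptrace_snd (outer phi phi) $c$c' = (\<Sum>j<k. mscale (of_real ((mu j)^2)) (outer (u j) (u j))) $c$c'"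
    for c c'
  proof -
    have "ptrace_snd (outer phi phi) $c$c' = (\<Sum>d\<in>UNIV. (\<Sum>i<k. (of_real (mu i) * u i $ c) * v i $ d)
        * cnj (\<Sum>j<k. (of_real (mu j) * u j $ c') * v j $ d))"
      by (simp add: ptrace_snd_def assms(2) mult_ac)
    also have "\<dots> = (\<Sum>j<k. (of_real (mu j) * u j $ c) * cnj (of_real (mu j) * u j $ c'))"
      by (rule sum_mult_cnj_orthonormal_expansion[OF assms(1)])
    finally show ?thesis
      by (simp add: power2_eq_square mult_ac)
  qed
  then show ?thesis
    by (simp add: vec_eq_iff)
qed

lemma mtrace_sq_diagonal:
  fixes u :: "nat \<Rightarrow> complex^'n::finite" and c :: "nat \<Rightarrow> complex"
  assumes "orthonormal_family n u"
  defines "rho \<equiv> \<Sum>i<n. mscale (c i) (outer (u i) (u i))"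
  shows "mtrace (rho ** rho) = (\<Sum>i<n. (c i)^2)"
proof -
  have "mtrace (rho ** rho) = (\<Sum>i<n. \<Sum>j<n. c i * c j * (cinner (u i) (u j) * cinner (u j) (u i)))"
    by (simp add: rho_def matrix_mult_sum_left matrix_mult_sum_right mtrace_sum mscale_mult_left
        mscale_mult_right outer_mult_outer mtrace_mscale mtrace_outer mult_ac sum_distrib_left)
  also have "\<dots> = (\<Sum>i<n. \<Sum>j<n. if i = j then c i * c i else 0)"
    by (intro sum.cong refl) (simp add: orthonormal_familyD[OF assms(1)])
  finally show ?thesis
    by (simp add: power2_eq_square)
qed

section \<open>Invariant product measurements\<close>

lemma sum_lessThan_mult_div_mod:
  "(\<Sum>h<M * K. F (h div K) (h mod K)) = (\<Sum>s<(M::nat). \<Sum>t<K. F s t)"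
proof -
  have bound: "s * K + t < M * K" if "s < M" "t < K" for s t
  proof -
    have "s * K + t < (s + 1) * K"
      using that by simp
    also have "\<dots> \<le> M * K"
      using that by (intro mult_right_mono) auto
    finally show ?thesis .
  qed
  have mod_bound: "h mod K < K" if "h < M * K" for h
    using that by (cases "K = 0") auto
  have "(\<Sum>h<M * K. F (h div K) (h mod K)) = (\<Sum>(s, t)\<in>{..<M} \<times> {..<K}. F s t)"
    by (rule sum.reindex_bij_witness[where i = "\<lambda>(s, t). s * K + t" and j = "\<lambda>h. (h div K, h mod K)"])
      (auto simp: bound mod_bound less_mult_imp_div_less)
  then show ?thesis
    by (simp add: sum.cartesian_product)
qed

lemma von_neumann_meas_basis:
  assumes "orthonormal_family M f" and "(\<Sum>s<M. outer (f s) (f s)) = mat 1"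
  shows "von_neumann_meas M (\<lambda>s. outer (f s) (f s))"
  using assms(2) orthonormal_familyD[OF assms(1)]
  by (auto simp: von_neumann_meas_def rank_one_proj_def norm_eq_1_iff_cinner intro!: exI)

text \<open>Measurements are indexed by an initial segment of the naturals, so the product of
  measurements with \<open>M\<close> and \<open>K\<close> outcomes enumerates the pair \<open>(s, t)\<close> as \<open>s * K + t\<close>.\<close>

lemma von_neumann_meas_tensor:
  assumes F: "von_neumann_meas M F" and G: "von_neumann_meas K G"
  shows "von_neumann_meas (M * K) (\<lambda>h. tensor_op (F (h div K)) (G (h mod K)))"
  unfolding von_neumann_meas_def
proof (intro conjI allI impI)
  have "K \<noteq> 0"
  proof
    assume "K = 0"
    then have "(\<Sum>t<K. G t) $ i $ i = 0" for i
      by simp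
    with G show False
      by (simp add: von_neumann_meas_def mat_nth)
  qed
  fix h assume "h < M * K"
  then have "h div K < M" "h mod K < K"
    using \<open>K \<noteq> 0\<close> by (simp_all add: less_mult_imp_div_less)
  then obtain e e' where "norm e = 1" "F (h div K) = outer e e" "norm e' = 1" "G (h mod K) = outer e' e'"
    using F G unfolding von_neumann_meas_def rank_one_proj_def by blast
  then show "rank_one_proj (tensor_op (F (h div K)) (G (h mod K)))"
    unfolding rank_one_proj_def
    by (intro exI[of _ "tensor_vec e e'"]) (simp add: tensor_op_outer norm_eq_1_iff_cinner cinner_tensor_vec)
next
  have "(\<Sum>h<M * K. tensor_op (F (h div K)) (G (h mod K))) = (\<Sum>s<M. \<Sum>t<K. tensor_op (F s) (G t))"
    by (rule sum_lessThan_mult_div_mod)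
  also have "\<dots> = tensor_op (\<Sum>s<M. F s) (\<Sum>t<K. G t)"
    by (simp add: tensor_op_sum)
  finally show "(\<Sum>h<M * K. tensor_op (F (h div K)) (G (h mod K))) = mat 1"
    using F G by (simp add: von_neumann_meas_def tensor_op_mat_1)
qed

lemma meas_channel_tensor:
  "meas_channel (M * K) (\<lambda>h. tensor_op (F (h div K)) (G (h mod K))) (tensor_op X Y) =
     tensor_op (meas_channel M F X) (meas_channel K G Y)"
proof -
  have "meas_channel (M * K) (\<lambda>h. tensor_op (F (h div K)) (G (h mod K))) (tensor_op X Y) =
      (\<Sum>h<M * K. tensor_op (F (h div K) ** X ** F (h div K)) (G (h mod K) ** Y ** G (h mod K)))"
    by (simp add: meas_channel_def tensor_op_mult)
  also have "\<dots> = (\<Sum>s<M. \<Sum>t<K. tensor_op (F s ** X ** F s) (G t ** Y ** G t))"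
    by (rule sum_lessThan_mult_div_mod)
  finally show ?thesis
    by (simp add: meas_channel_def tensor_op_sum)
qed

lemma meas_channel_basis_diagonal:
  fixes f u :: "nat \<Rightarrow> complex^'n::finite" and c :: "nat \<Rightarrow> complex"
  assumes on: "orthonormal_family M f" and "n \<le> M" and f_u: "\<And>i. i < n \<Longrightarrow> f i = u i"
  defines "rho \<equiv> \<Sum>i<n. mscale (c i) (outer (u i) (u i))"
  shows "meas_channel M (\<lambda>s. outer (f s) (f s)) rho = rho"
proof -
  have rho_f: "rho = (\<Sum>i<n. mscale (c i) (outer (f i) (f i)))"
    using f_u by (simp add: rho_def)
  have "meas_channel M (\<lambda>s. outer (f s) (f s)) rho
      = (\<Sum>s<M. \<Sum>i<n. mscale (c i * (cinner (f s) (f i) * cinner (f i) (f s))) (outer (f s) (f s)))"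
    by (simp add: meas_channel_def rho_f matrix_mult_sum_left matrix_mult_sum_right mscale_mult_left
        mscale_mult_right outer_mult_outer mult_ac)
  also have "\<dots> = (\<Sum>s<M. \<Sum>i<n. if i = s then mscale (c i) (outer (f i) (f i)) else 0)"
    using \<open>n \<le> M\<close> by (intro sum.cong refl) (auto simp: orthonormal_familyD[OF on])
  also have "\<dots> = rho"
  proof -
    have "{..<M} \<inter> {s. s < n} = {..<n}"
      using \<open>n \<le> M\<close> by auto
    then show ?thesis
      by (simp add: sum.swap[of _ "{..<n}"] sum.If_cases rho_f)
  qed
  finally show ?thesis .
qed

lemma exists_invariant_meas_tensor_diagonal:
  fixes u :: "nat \<Rightarrow> complex^'b::finite" and v :: "nat \<Rightarrow> complex^'c::finite"
    and a b :: "nat \<Rightarrow> complex"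
  assumes "orthonormal_family n u" and "orthonormal_family k v"
  defines "rho \<equiv> tensor_op (\<Sum>i<n. mscale (a i) (outer (u i) (u i))) (\<Sum>j<k. mscale (b j) (outer (v j) (v j)))"
  shows "\<exists>m P. von_neumann_meas m P \<and> meas_channel m P rho = rho"
proof -
  obtain M f where f: "n \<le> M" "\<And>i. i < n \<Longrightarrow> f i = u i" "orthonormal_family M f"
      "(\<Sum>s<M. outer (f s) (f s)) = mat 1"
    using orthonormal_family_extend_basis[OF assms(1)] by blast
  obtain K g where g: "k \<le> K" "\<And>j. j < k \<Longrightarrow> g j = v j" "orthonormal_family K g"
      "(\<Sum>t<K. outer (g t) (g t)) = mat 1"
    using orthonormal_family_extend_basis[OF assms(2)] by blast
  let ?P = "\<lambda>h. tensor_op (outer (f (h div K)) (f (h div K))) (outer (g (h mod K)) (g (h mod K)))"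
  have "von_neumann_meas (M * K) ?P"
    using von_neumann_meas_tensor von_neumann_meas_basis[OF f(3,4)] von_neumann_meas_basis[OF g(3,4)] .
  moreover have "meas_channel (M * K) ?P rho = rho"
    unfolding rho_def meas_channel_tensor[of M K "\<lambda>s. outer (f s) (f s)" "\<lambda>t. outer (g t) (g t)"]
    by (simp add: meas_channel_basis_diagonal[OF f(3,1,2)] meas_channel_basis_diagonal[OF g(3,1,2)])
  ultimately show ?thesis
    by blast
qed

lemma NHb_pure_product:
  fixes psi :: "complex^('a::finite \<times> 'b::finite)" and phi :: "complex^('c::finite \<times> 'd::finite)"
  defines "rho \<equiv> ptrace_AD (outer (tensor_vec psi phi) (tensor_vec psi phi))"
  assumes "norm psi = 1" and "norm phi = 1"
    and "\<exists>m P. von_neumann_meas m P \<and> meas_channel m P rho = rho"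
  shows "NHb (outer psi psi) (outer phi phi) = 1 - Re (mtrace (rho ** rho))"
proof -
  let ?Psi = "tensor_vec psi phi"
  let ?S = "outer ?Psi ?Psi"
  have unit: "cinner ?Psi ?Psi = 1"
    using assms(2,3) by (simp add: cinner_tensor_vec norm_eq_1_iff_cinner)
  obtain m0 P0 where "von_neumann_meas m0 P0" "meas_channel m0 P0 rho = rho"
    using assms(4) by blast
  then have "{(hs_norm (?S - (\<Sum>h<m. embed_BC (P h) ** ?S ** embed_BC (P h))))\<^sup>2 | m P.
      von_neumann_meas m P \<and> meas_channel m P rho = rho} = {1 - Re (mtrace (rho ** rho))}"
    using hs_norm_sq_pure_minus_dephased_embed_BC[OF unit, folded rho_def]
    by (auto intro!: exI[of _ m0] exI[of _ P0])
  then show ?thesis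
    by (simp add: NHb_def Let_def tensor_op_outer mat_sqrt_outer[OF unit] rho_def)
qed

theorem theorem1:
  fixes psi :: "complex^('a::finite \<times> 'b::finite)"
    and phi :: "complex^('c::finite \<times> 'd::finite)"
    and n k :: nat
    and lam mu :: "nat \<Rightarrow> real"
    and uA :: "nat \<Rightarrow> complex^'a" and uB :: "nat \<Rightarrow> complex^'b"
    and vC :: "nat \<Rightarrow> complex^'c" and vD :: "nat \<Rightarrow> complex^'d"
  assumes "norm psi = 1" and "norm phi = 1"
    and "orthonormal_family n uA" and "orthonormal_family n uB"
    and "orthonormal_family k vC" and "orthonormal_family k vD"
    and "\<forall>i<n. lam i \<ge> 0" and "\<forall>j<k. mu j \<ge> 0"
    and "psi = (\<Sum>i<n. cscale (complex_of_real (lam i)) (tensor_vec (uA i) (uB i)))"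
    and "phi = (\<Sum>j<k. cscale (complex_of_real (mu j)) (tensor_vec (vC j) (vD j)))"
  shows "NHb (outer psi psi) (outer phi phi) = 1 - (\<Sum>i<n. \<Sum>j<k. lam i ^ 4 * mu j ^ 4)"
proof -
  \<comment> \<open>Only \<open>lam i ^ 2\<close> and \<open>mu j ^ 2\<close> enter, so the signs of the Schmidt coefficients are irrelevant.\<close>
  define rho_B where "rho_B = (\<Sum>i<n. mscale (of_real ((lam i)^2)) (outer (uB i) (uB i)))"
  define rho_C where "rho_C = (\<Sum>j<k. mscale (of_real ((mu j)^2)) (outer (vC j) (vC j)))"
  have rho: "ptrace_AD (outer (tensor_vec psi phi) (tensor_vec psi phi)) = tensor_op rho_B rho_C"
    by (simp add: tensor_op_outer[symmetric] ptrace_AD_tensor_op rho_B_def rho_C_def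
        ptrace_fst_outer_schmidt[OF assms(3,9)] ptrace_snd_outer_schmidt[OF assms(6,10)])
  have "mtrace (tensor_op rho_B rho_C ** tensor_op rho_B rho_C) = of_real (\<Sum>i<n. \<Sum>j<k. lam i ^ 4 * mu j ^ 4)"
    by (simp add: tensor_op_mult mtrace_tensor_op rho_B_def rho_C_def mtrace_sq_diagonal[OF assms(4)]
        mtrace_sq_diagonal[OF assms(5)] sum_product flip: power_mult)
  moreover have "\<exists>m P. von_neumann_meas m P \<and> meas_channel m P (tensor_op rho_B rho_C) = tensor_op rho_B rho_C"
    unfolding rho_B_def rho_C_def by (rule exists_invariant_meas_tensor_diagonal[OF assms(4,5)])
  ultimately show ?thesis
    using NHb_pure_product[OF assms(1,2)] rho by simp
qed

end
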